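(* Let $m_1,\dots,m_k$ be natural numbers with greatest common divisor $q$, and let $\chi_1,\dots,\chi_k\in\mathbb{Z}_2$. Suppose that either (1) there exist $i,j\in\{1,\dots,k\}$ with $m_i$ even, $\chi_i\neq0$ and $m_j$ odd; or (2) there exist $i,j\in\{1,\dots,k\}$ with $m_i$ odd, $\chi_i=0$ and $\chi_j\neq0$. Then there exists $N\in\mathbb{N}$ such that for every $n\ge N$ and every $\chi\in\mathbb{Z}_2$ there are $l_1,\dots,l_k\in\mathbb{N}$ with \[ l_1m_1+\dots+l_km_k=nq\quad\text{and}\quad l_1\chi_1+\dots+l_k\chi_k=\chi. \]
   Context: $\mathbb{N}=\{1,2,\dots\}$; $\mathbb{Z}_2=\mathbb{Z}/2\mathbb{Z}$, and $l\chi$ for $l\in\mathbb{N}$, $\chi\in\mathbb{Z}_2$ is the usual integer multiple in $\mathbb{Z}_2$. *)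

theory Defs
  imports Main "HOL-Library.Z2"
begin

end

theory Submission
  imports Defs
begin

(* Bezout's identity writes q = P - Q with P, Q nonnegative combinations of the
   m_i.  If m_e = t q, then (t - 1) Q + j q = (t - 1 - j) Q + j P for j < t, and
   adding multiples of m_e shows that n q is a nonnegative combination as soon as
   n q >= (t - 1) Q.
   Pick a, b with m_b odd, chi_a = 1 and m_a chi_b = 0 (either hypothesis gives
   them).  Represent n q - (sum m_i + m_a m_b) in this way and add 1 to every
   coefficient.  The remaining m_a m_b can be spent as m_a extra copies of m_b
   or as m_b extra copies of m_a; both give the weighted sum n q, and their
   chi-sums differ by m_b chi_a - m_a chi_b = 1 in Z_2. *)

lemma of_nat_bit: "(of_nat n :: bit) = (if even n then 0 else 1)"
  by (induction n) auto

lemma bit_neq_imp_add_one_eq: "c \<noteq> x \<Longrightarrow> x + 1 = (c::bit)"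
  by (cases c; cases x) simp_all

lemma sum_of_nat_add_delta_mult:
  fixes w :: "'i \<Rightarrow> 'a::comm_semiring_1"
  assumes "finite A" "j \<in> A"
  shows "(\<Sum>i\<in>A. of_nat (f i + (if i = j then x else 0)) * w i)
         = (\<Sum>i\<in>A. of_nat (f i) * w i) + of_nat x * w j"
  using assms
  by (simp add: distrib_right sum.distrib if_distrib[of of_nat] if_distrib[of "\<lambda>y. y * _"]
      cong: if_cong)

definition nat_combinations :: "('i \<Rightarrow> nat) \<Rightarrow> 'i set \<Rightarrow> nat set" where
  "nat_combinations m A = {x. \<exists>g. x = (\<Sum>i\<in>A. g i * m i)}"

lemma nat_combinations_add:
  assumes "x \<in> nat_combinations m A" "y \<in> nat_combinations m A"
  shows "x + y \<in> nat_combinations m A"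
proof -
  obtain g h where "x = (\<Sum>i\<in>A. g i * m i)" "y = (\<Sum>i\<in>A. h i * m i)"
    using assms unfolding nat_combinations_def by fast
  then have "x + y = (\<Sum>i\<in>A. (g i + h i) * m i)"
    by (simp add: sum.distrib add_mult_distrib)
  then show ?thesis unfolding nat_combinations_def by fast
qed

lemma nat_combinations_mult:
  assumes "x \<in> nat_combinations m A"
  shows "c * x \<in> nat_combinations m A"
proof -
  obtain g where "x = (\<Sum>i\<in>A. g i * m i)"
    using assms unfolding nat_combinations_def by fast
  then have "c * x = (\<Sum>i\<in>A. (c * g i) * m i)"
    by (simp add: sum_distrib_left mult.assoc)
  then show ?thesis unfolding nat_combinations_def by fast
qed

lemma nat_combinations_generator:
  assumes "finite A" "e \<in> A"
  shows "m e \<in> nat_combinations m A"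
proof -
  have "m e = (\<Sum>i\<in>A. (if i = e then 1 else 0) * m i)"
    using assms by (simp add: if_distrib[of "\<lambda>y. y * _"] cong: if_cong)
  then show ?thesis unfolding nat_combinations_def by fast
qed

lemma sum_in_nat_combinations: "(\<Sum>i\<in>A. m i) \<in> nat_combinations m A"
proof -
  have "(\<Sum>i\<in>A. m i) = (\<Sum>i\<in>A. 1 * m i)" by simp
  then show ?thesis unfolding nat_combinations_def by fast
qed

lemma Gcd_dvd_nat_combinations:
  assumes "x \<in> nat_combinations m A"
  shows "Gcd (m ` A) dvd x"
  using assms unfolding nat_combinations_def by (auto intro!: dvd_sum dvd_mult)

lemma Gcd_image_int_combination:
  fixes m :: "'i \<Rightarrow> nat"
  assumes "finite A"
  shows "\<exists>c::'i \<Rightarrow> int. int (Gcd (m ` A)) = (\<Sum>i\<in>A. c i * int (m i))"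
  using assms
proof (induction A rule: finite_induct)
  case empty
  then show ?case by simp
next
  case (insert a A)
  then obtain c where c: "int (Gcd (m ` A)) = (\<Sum>i\<in>A. c i * int (m i))"
    by blast
  obtain u v where uv:
    "u * int (m a) + v * int (Gcd (m ` A)) = gcd (int (m a)) (int (Gcd (m ` A)))"
    using bezout_int by blast
  define c' where "c' i = (if i = a then u else v * c i)" for i
  have "(\<Sum>i\<in>insert a A. c' i * int (m i)) = u * int (m a) + (\<Sum>i\<in>A. v * (c i * int (m i)))"
    using insert by (auto simp: c'_def intro!: sum.cong)
  also have "\<dots> = u * int (m a) + v * int (Gcd (m ` A))"
    by (simp add: c sum_distrib_left)
  also have "\<dots> = int (Gcd (m ` insert a A))"
    using uv by simp
  finally show ?case by metis
qed

lemma Gcd_image_eq_diff_nat_combinations: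
  fixes m :: "'i \<Rightarrow> nat"
  assumes "finite A"
  obtains P Q where "P \<in> nat_combinations m A" "Q \<in> nat_combinations m A"
    "P = Q + Gcd (m ` A)"
proof -
  obtain c where c: "int (Gcd (m ` A)) = (\<Sum>i\<in>A. c i * int (m i))"
    using Gcd_image_int_combination[OF assms] by blast
  define P where "P = (\<Sum>i\<in>A. nat (c i) * m i)"
  define Q where "Q = (\<Sum>i\<in>A. nat (- c i) * m i)"
  have "c i * int (m i) = int (nat (c i) * m i) - int (nat (- c i) * m i)" for i
    by (simp add: left_diff_distrib)
  then have "int (Gcd (m ` A)) = int P - int Q"
    unfolding c P_def Q_def by (simp add: sum_subtractf)
  then have "P = Q + Gcd (m ` A)" by linarith
  moreover have "P \<in> nat_combinations m A" "Q \<in> nat_combinations m A"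
    unfolding P_def Q_def nat_combinations_def by fast+
  ultimately show ?thesis using that by blast
qed

lemma eventually_multiples_of_Gcd_in_nat_combinations:
  fixes m :: "'i \<Rightarrow> nat"
  assumes "finite A" "e \<in> A" "m e \<noteq> 0"
  shows "\<exists>N. \<forall>n\<ge>N. n * Gcd (m ` A) \<in> nat_combinations m A"
proof -
  define q where "q = Gcd (m ` A)"
  obtain P Q where P: "P \<in> nat_combinations m A" and Q: "Q \<in> nat_combinations m A"
    and PQ: "P = Q + q"
    using Gcd_image_eq_diff_nat_combinations[OF assms(1)] unfolding q_def by blast
  obtain u where u: "Q = q * u"
    using Gcd_dvd_nat_combinations[OF Q] unfolding q_def by blast
  obtain t where t: "m e = q * t"
    using assms(2) unfolding q_def by (meson Gcd_dvd dvdE image_eqI)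
  have "t \<noteq> 0" using t assms(3) by auto
  show ?thesis unfolding q_def[symmetric]
  proof (intro exI[of _ "(t - 1) * u"] allI impI)
    fix n assume n: "n \<ge> (t - 1) * u"
    define r where "r = (n - (t - 1) * u) mod t"
    define s where "s = (n - (t - 1) * u) div t"
    have "r < t" using \<open>t \<noteq> 0\<close> unfolding r_def by simp
    have "(t - 1 - r) * Q + r * P + s * m e = ((t - 1 - r) + r) * Q + (r + s * t) * q"
      unfolding PQ t by (simp add: algebra_simps)
    also have "\<dots> = (t - 1) * u * q + (n - (t - 1) * u) * q"
      using \<open>r < t\<close> unfolding u r_def s_def by simp
    also have "\<dots> = n * q"
      using n by (simp flip: add_mult_distrib)
    finally have "n * q = (t - 1 - r) * Q + r * P + s * m e" ..
    moreover have "m e \<in> nat_combinations m A"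
      using assms(1,2) by (rule nat_combinations_generator)
    ultimately show "n * q \<in> nat_combinations m A"
      using P Q by (simp add: nat_combinations_add nat_combinations_mult)
  qed
qed

lemma exists_coefficients_with_any_parity:
  fixes m :: "'i \<Rightarrow> nat" and \<chi> :: "'i \<Rightarrow> bit"
  assumes A: "finite A" "a \<in> A" "b \<in> A"
    and odd_b: "odd (m b)" and \<chi>_a: "\<chi> a = 1" and \<chi>_b: "of_nat (m a) * \<chi> b = 0"
    and f: "(\<Sum>i\<in>A. f i * m i) + m a * m b = x"
  shows "\<exists>l. (\<forall>i\<in>A. f i \<le> l i) \<and> (\<Sum>i\<in>A. l i * m i) = x \<and>
           (\<Sum>i\<in>A. of_nat (l i) * \<chi> i) = c"
proof -
  define X where "X = (\<Sum>i\<in>A. of_nat (f i) * \<chi> i)"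
  show ?thesis
  proof (cases "c = X")
    case True
    let ?l = "\<lambda>i. f i + (if i = b then m a else 0)"
    have "(\<Sum>i\<in>A. ?l i * m i) = x"
      using sum_of_nat_add_delta_mult[OF A(1,3), of f "m a" m] f by simp
    moreover have "(\<Sum>i\<in>A. of_nat (?l i) * \<chi> i) = X + of_nat (m a) * \<chi> b"
      unfolding X_def by (rule sum_of_nat_add_delta_mult[OF A(1,3)])
    ultimately show ?thesis
      using True \<chi>_b by (intro exI[of _ ?l]) simp
  next
    case False
    let ?l = "\<lambda>i. f i + (if i = a then m b else 0)"
    have "(\<Sum>i\<in>A. ?l i * m i) = x"
      using sum_of_nat_add_delta_mult[OF A(1,2), of f "m b" m] f by (simp add: mult.commute)
    moreover have "(\<Sum>i\<in>A. of_nat (?l i) * \<chi> i) = X + of_nat (m b) * \<chi> a"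
      unfolding X_def by (rule sum_of_nat_add_delta_mult[OF A(1,2)])
    moreover have "X + of_nat (m b) * \<chi> a = c"
      using bit_neq_imp_add_one_eq[OF False] \<chi>_a odd_b by (simp add: of_nat_bit)
    ultimately show ?thesis by (intro exI[of _ ?l]) simp
  qed
qed

lemma eventually_nat_combinations_with_any_parity:
  fixes m :: "'i \<Rightarrow> nat" and \<chi> :: "'i \<Rightarrow> bit"
  assumes A: "finite A" "a \<in> A" "b \<in> A"
    and odd_b: "odd (m b)" and \<chi>_a: "\<chi> a = 1" and \<chi>_b: "of_nat (m a) * \<chi> b = 0"
  shows "\<exists>N. \<forall>n\<ge>N. \<forall>c. \<exists>l. (\<forall>i\<in>A. l i \<ge> 1) \<and>
           (\<Sum>i\<in>A. l i * m i) = n * Gcd (m ` A) \<and> (\<Sum>i\<in>A. of_nat (l i) * \<chi> i) = c"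
proof -
  define q where "q = Gcd (m ` A)"
  have "(\<Sum>i\<in>A. m i) + m a * m b \<in> nat_combinations m A"
    using A by (intro nat_combinations_add nat_combinations_mult sum_in_nat_combinations
        nat_combinations_generator)
  then obtain \<gamma> where \<gamma>: "(\<Sum>i\<in>A. m i) + m a * m b = q * \<gamma>"
    unfolding q_def by (rule Gcd_dvd_nat_combinations[THEN dvdE])
  have "m b \<noteq> 0" using odd_pos[OF odd_b] by simp
  then obtain N where N: "\<forall>n\<ge>N. n * q \<in> nat_combinations m A"
    using eventually_multiples_of_Gcd_in_nat_combinations[OF A(1,3)] unfolding q_def by blast
  show ?thesis unfolding q_def[symmetric]
  proof (intro exI[of _ "N + \<gamma>"] allI impI)
    fix n and c :: bit assume n: "n \<ge> N + \<gamma>"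
    then have "n - \<gamma> \<ge> N" by simp
    then obtain g where g: "(\<Sum>i\<in>A. g i * m i) = (n - \<gamma>) * q"
      using N unfolding nat_combinations_def by force
    have "(\<Sum>i\<in>A. (1 + g i) * m i) + m a * m b
          = (\<Sum>i\<in>A. m i) + m a * m b + (\<Sum>i\<in>A. g i * m i)"
      by (simp add: sum.distrib)
    also have "\<dots> = (\<gamma> + (n - \<gamma>)) * q"
      unfolding \<gamma> g by (simp add: algebra_simps)
    also have "\<dots> = n * q"
      using n by simp
    finally obtain l where l: "\<forall>i\<in>A. 1 + g i \<le> l i" "(\<Sum>i\<in>A. l i * m i) = n * q"
      "(\<Sum>i\<in>A. of_nat (l i) * \<chi> i) = c"
      using exists_coefficients_with_any_parity[OF A odd_b \<chi>_a \<chi>_b, of "\<lambda>i. 1 + g i"]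
      by blast
    moreover have "\<forall>i\<in>A. l i \<ge> 1" using l(1) by fastforce
    ultimately show "\<exists>l. (\<forall>i\<in>A. l i \<ge> 1) \<and> (\<Sum>i\<in>A. l i * m i) = n * q \<and>
                (\<Sum>i\<in>A. of_nat (l i) * \<chi> i) = c"
      by blast
  qed
qed

theorem lemma4p7:
  fixes k q :: nat and m :: "nat \<Rightarrow> nat" and \<chi> :: "nat \<Rightarrow> bit"
  assumes m_pos: "\<forall>i\<in>{1..k}. m i \<ge> 1"
    and q_def: "q = Gcd (m ` {1..k})"
    and cond: "(\<exists>i\<in>{1..k}. \<exists>j\<in>{1..k}. even (m i) \<and> \<chi> i \<noteq> 0 \<and> odd (m j))
             \<or> (\<exists>i\<in>{1..k}. \<exists>j\<in>{1..k}. odd (m i) \<and> \<chi> i = 0 \<and> \<chi> j \<noteq> 0)"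
  shows "\<exists>N::nat. N \<ge> 1 \<and> (\<forall>n\<ge>N. \<forall>c::bit. \<exists>l::nat \<Rightarrow> nat.
           (\<forall>i\<in>{1..k}. l i \<ge> 1) \<and>
           (\<Sum>i=1..k. l i * m i) = n * q \<and>
           (\<Sum>i=1..k. of_nat (l i) * \<chi> i) = c)"
proof -
  obtain a b where "a \<in> {1..k}" "b \<in> {1..k}" "odd (m b)" "\<chi> a = 1" "of_nat (m a) * \<chi> b = 0"
    using cond by (auto simp: of_nat_bit)
  then obtain N where "\<forall>n\<ge>N. \<forall>c. \<exists>l. (\<forall>i\<in>{1..k}. l i \<ge> 1) \<and>
      (\<Sum>i=1..k. l i * m i) = n * q \<and> (\<Sum>i=1..k. of_nat (l i) * \<chi> i) = c"
    unfolding q_def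
    using eventually_nat_combinations_with_any_parity[of "{1..k}" a b m \<chi>] by auto
  then show ?thesis by (intro exI[of _ "Suc N"]) auto
qed

end
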